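(* Every cubic graph of tree-width at most 3 contains a triangle, a copy of $K_{2,3}$, or a copy of the domino as a subgraph.
   Context: All graphs are finite and simple; cubic means 3-regular. The domino is the $2\times 3$ grid graph: vertices $a_1,a_2,a_3,b_1,b_2,b_3$ and edges $a_1a_2,a_2a_3,b_1b_2,b_2b_3,a_1b_1,a_2b_2,a_3b_3$. *)

theory Defs
  imports Main
begin

definition simple_graph :: "'a set \<Rightarrow> ('a \<Rightarrow> 'a \<Rightarrow> bool) \<Rightarrow> bool" where
  "simple_graph V E \<longleftrightarrow> finite V \<and>
     (\<forall>u v. E u v \<longrightarrow> u \<in> V \<and> v \<in> V \<and> u \<noteq> v \<and> E v u)"

definition cubic :: "'a set \<Rightarrow> ('a \<Rightarrow> 'a \<Rightarrow> bool) \<Rightarrow> bool" where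
  "cubic V E \<longleftrightarrow> (\<forall>v\<in>V. card {u \<in> V. E v u} = 3)"

definition is_walk :: "('a \<Rightarrow> 'a \<Rightarrow> bool) \<Rightarrow> 'a list \<Rightarrow> bool" where
  "is_walk E xs \<longleftrightarrow> xs \<noteq> [] \<and> (\<forall>i. Suc i < length xs \<longrightarrow> E (xs ! i) (xs ! Suc i))"

definition connected_on :: "'a set \<Rightarrow> ('a \<Rightarrow> 'a \<Rightarrow> bool) \<Rightarrow> bool" where
  "connected_on S E \<longleftrightarrow> (\<forall>u\<in>S. \<forall>v\<in>S. \<exists>xs. is_walk E xs \<and> set xs \<subseteq> S \<and>
       hd xs = u \<and> last xs = v)"

definition is_cycle :: "('a \<Rightarrow> 'a \<Rightarrow> bool) \<Rightarrow> 'a list \<Rightarrow> bool" where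
  "is_cycle E xs \<longleftrightarrow> length xs \<ge> 3 \<and> distinct xs \<and> is_walk E xs \<and> E (last xs) (hd xs)"

definition is_tree :: "'t set \<Rightarrow> ('t \<Rightarrow> 't \<Rightarrow> bool) \<Rightarrow> bool" where
  "is_tree N F \<longleftrightarrow> simple_graph N F \<and> N \<noteq> {} \<and> connected_on N F \<and>
     \<not> (\<exists>xs. is_cycle F xs)"

definition tree_decomposition ::
  "'a set \<Rightarrow> ('a \<Rightarrow> 'a \<Rightarrow> bool) \<Rightarrow> 't set \<Rightarrow> ('t \<Rightarrow> 't \<Rightarrow> bool) \<Rightarrow> ('t \<Rightarrow> 'a set) \<Rightarrow> bool" where
  "tree_decomposition V E N F B \<longleftrightarrow> is_tree N F \<and>
     (\<forall>t\<in>N. B t \<subseteq> V) \<and>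
     (\<forall>v\<in>V. \<exists>t\<in>N. v \<in> B t) \<and>
     (\<forall>u v. E u v \<longrightarrow> (\<exists>t\<in>N. u \<in> B t \<and> v \<in> B t)) \<and>
     (\<forall>v\<in>V. connected_on {t \<in> N. v \<in> B t} F)"

text \<open>Tree-width at most k: a tree decomposition all of whose bags have at most k+1
  vertices. Tree nodes are taken from nat (no loss of generality for finite trees).\<close>
definition treewidth_le :: "'a set \<Rightarrow> ('a \<Rightarrow> 'a \<Rightarrow> bool) \<Rightarrow> nat \<Rightarrow> bool" where
  "treewidth_le V E k \<longleftrightarrow> (\<exists>(N::nat set) F B. tree_decomposition V E N F B \<and>
     (\<forall>t\<in>N. card (B t) \<le> k + 1))"

definition has_triangle :: "'a set \<Rightarrow> ('a \<Rightarrow> 'a \<Rightarrow> bool) \<Rightarrow> bool" where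
  "has_triangle V E \<longleftrightarrow> (\<exists>x y z. x \<in> V \<and> y \<in> V \<and> z \<in> V \<and> distinct [x, y, z] \<and>
     E x y \<and> E y z \<and> E x z)"

definition has_K23 :: "'a set \<Rightarrow> ('a \<Rightarrow> 'a \<Rightarrow> bool) \<Rightarrow> bool" where
  "has_K23 V E \<longleftrightarrow> (\<exists>a1 a2 b1 b2 b3. {a1, a2, b1, b2, b3} \<subseteq> V \<and>
     distinct [a1, a2, b1, b2, b3] \<and>
     E a1 b1 \<and> E a1 b2 \<and> E a1 b3 \<and> E a2 b1 \<and> E a2 b2 \<and> E a2 b3)"

text \<open>Domino: 2x3 grid, edges a1a2, a2a3, b1b2, b2b3, a1b1, a2b2, a3b3.\<close>
definition has_domino :: "'a set \<Rightarrow> ('a \<Rightarrow> 'a \<Rightarrow> bool) \<Rightarrow> bool" where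
  "has_domino V E \<longleftrightarrow> (\<exists>a1 a2 a3 b1 b2 b3. {a1, a2, a3, b1, b2, b3} \<subseteq> V \<and>
     distinct [a1, a2, a3, b1, b2, b3] \<and>
     E a1 a2 \<and> E a2 a3 \<and> E b1 b2 \<and> E b2 b3 \<and> E a1 b1 \<and> E a2 b2 \<and> E a3 b3)"

end

theory Submission
  imports Defs
begin

(* Orient each edge ts of a width-3 tree decomposition away from s, call a vertex private to
   (t, s) if it lies in a bag on the side of t but not in the bag of s, and call (t, s)
   critical if it has at least two private vertices and the bag of t is not contained in the
   bag of s.  A root with a virtual parent is critical, so take a critical pair whose side of
   the tree is smallest.  Minimality forces every private vertex outside the bag of t to have
   all three neighbours in that bag of at most four vertices, while the private vertices
   inside it have all neighbours in the bag or private.  Without K_{2,3} distinct vertices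
   have distinct neighbourhoods, and without triangles adjacent vertices have disjoint ones;
   with these facts, counting in the bag rules out every configuration except three private
   vertices outside the bag, and those span a domino. *)

lemma is_walk_iff_successively: "is_walk F xs \<longleftrightarrow> xs \<noteq> [] \<and> successively F xs"
  by (simp add: is_walk_def successively_conv_nth)

inductive reachable :: "('t \<Rightarrow> 't \<Rightarrow> bool) \<Rightarrow> 't set \<Rightarrow> 't \<Rightarrow> 't \<Rightarrow> bool"
  for F S u where
  refl: "u \<in> S \<Longrightarrow> reachable F S u u"
| step: "reachable F S u v \<Longrightarrow> F v w \<Longrightarrow> w \<in> S \<Longrightarrow> reachable F S u w"

lemma reachable_in: "reachable F S u v \<Longrightarrow> u \<in> S \<and> v \<in> S"
  by (induction rule: reachable.induct) auto

lemma reachable_ConsI: "reachable F S v w \<Longrightarrow> F u v \<Longrightarrow> u \<in> S \<Longrightarrow> reachable F S u w"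
  by (induction rule: reachable.induct) (auto intro: reachable.intros)

lemma reachable_if_walk: "is_walk F xs \<Longrightarrow> set xs \<subseteq> S \<Longrightarrow> reachable F S (hd xs) (last xs)"
proof (induction xs rule: induct_list012)
  case (3 x y zs)
  then show ?case by (auto simp: is_walk_iff_successively intro: reachable_ConsI)
qed (auto simp: is_walk_iff_successively intro: reachable.refl)

lemma distinct_walk_if_reachable:
  "reachable F S u v \<Longrightarrow>
     \<exists>xs. is_walk F xs \<and> distinct xs \<and> set xs \<subseteq> S \<and> hd xs = u \<and> last xs = v"
proof (induction rule: reachable.induct)
  case refl
  then show ?case by (intro exI[of _ "[u]"]) (simp add: is_walk_def)
next
  case (step v w)
  then obtain xs where xs: "is_walk F xs" "distinct xs" "set xs \<subseteq> S" "hd xs = u" "last xs = v"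
    by blast
  show ?case
  proof (cases "w \<in> set xs")
    case True
    then obtain i where i: "i < length xs" "xs ! i = w" by (metis in_set_conv_nth)
    have "is_walk F (take (Suc i) xs)" using xs(1) by (auto simp: is_walk_def)
    moreover have "last (take (Suc i) xs) = w" using i by (simp add: take_Suc_conv_app_nth)
    moreover have "set (take (Suc i) xs) \<subseteq> S" using xs(3) set_take_subset by fast
    ultimately show ?thesis
      using xs(1,2,4) by (intro exI[of _ "take (Suc i) xs"]) (auto simp: is_walk_def)
  next
    case False
    have "is_walk F (xs @ [w])"
      using xs(1,5) step.hyps(2) by (auto simp: is_walk_iff_successively successively_append_iff)
    then show ?thesis
      using xs False step.hyps(3) by (intro exI[of _ "xs @ [w]"]) (auto simp: is_walk_def)
  qed
qed

lemma cycle_if_reachable: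
  assumes "reachable F S a b" "a \<noteq> b" "c \<notin> S" "F c a" "F b c"
  shows "\<exists>ys. is_cycle F ys"
proof -
  obtain xs where xs: "is_walk F xs" "distinct xs" "set xs \<subseteq> S" "hd xs = a" "last xs = b"
    using distinct_walk_if_reachable[OF assms(1)] by blast
  then obtain y ys where "xs = y # ys" "ys \<noteq> []"
    using assms(2) by (cases xs; cases "tl xs") (auto simp: is_walk_def)
  then have "is_cycle F (c # xs)"
    using xs assms(3-5) by (auto simp: is_cycle_def is_walk_iff_successively Suc_le_eq)
  then show ?thesis by blast
qed

lemma reachable_crossing_edge:
  "reachable F S u v \<Longrightarrow> P u \<Longrightarrow> \<not> P v \<Longrightarrow> \<exists>m n. F m n \<and> m \<in> S \<and> n \<in> S \<and> P m \<and> \<not> P n"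
  by (induction rule: reachable.induct) (blast dest: reachable_in)+

locale tree_decomp =
  fixes V :: "'a set" and E :: "'a \<Rightarrow> 'a \<Rightarrow> bool"
    and N :: "'t set" and F :: "'t \<Rightarrow> 't \<Rightarrow> bool" and B :: "'t \<Rightarrow> 'a set"
  assumes simple: "simple_graph V E"
    and decomposition: "tree_decomposition V E N F B"
    and bag_outside: "t \<notin> N \<Longrightarrow> B t = {}"
begin

lemma finite_V: "finite V"
  and edge_irrefl: "\<not> E v v"
  using simple by (auto simp: simple_graph_def)

lemma finite_N: "finite N"
  and tree_edge_in_N: "F t u \<Longrightarrow> t \<in> N \<and> u \<in> N"
  and tree_edge_sym: "F t u \<Longrightarrow> F u t"
  and tree_edge_irrefl: "\<not> F t t"
  and tree_acyclic: "\<not> is_cycle F xs"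
  and tree_connected: "connected_on N F"
  using decomposition by (auto simp: tree_decomposition_def is_tree_def simple_graph_def)

lemma bag_subset_V: "B t \<subseteq> V"
  using decomposition bag_outside by (cases "t \<in> N") (auto simp: tree_decomposition_def)

lemma vertex_in_bag: "v \<in> V \<Longrightarrow> \<exists>t\<in>N. v \<in> B t"
  and edge_in_bag: "E u v \<Longrightarrow> \<exists>t\<in>N. u \<in> B t \<and> v \<in> B t"
  and bags_connected: "v \<in> V \<Longrightarrow> connected_on {t \<in> N. v \<in> B t} F"
  using decomposition by (auto simp: tree_decomposition_def)

text \<open>A pair \<open>(t, s)\<close> stands for the tree edge \<open>ts\<close> directed away from \<open>s\<close>; a node
  \<open>s \<notin> N\<close> serves as a virtual parent of the root \<open>t\<close>, whose branch is then all of \<open>N\<close>.\<close>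

definition oriented :: "'t \<Rightarrow> 't \<Rightarrow> bool" where
  "oriented t s \<longleftrightarrow> t \<in> N \<and> (F t s \<or> s \<notin> N)"

definition branch :: "'t \<Rightarrow> 't \<Rightarrow> 't set" where
  "branch t s = {u. reachable F (N - {s}) t u}"

definition private_vertices :: "'t \<Rightarrow> 't \<Rightarrow> 'a set" where
  "private_vertices t s = (\<Union>u\<in>branch t s. B u) - B s"

definition critical :: "'t \<Rightarrow> 't \<Rightarrow> bool" where
  "critical t s \<longleftrightarrow> oriented t s \<and> 2 \<le> card (private_vertices t s) \<and> \<not> B t \<subseteq> B s"

lemma branch_subset: "branch t s \<subseteq> N - {s}"
  unfolding branch_def using reachable_in by fast

lemma self_in_branch: "oriented t s \<Longrightarrow> t \<in> branch t s"
  unfolding oriented_def branch_def using tree_edge_irrefl by (auto intro: reachable.refl)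

lemma finite_branch: "finite (branch t s)"
  using branch_subset finite_N finite_subset by blast

lemma oriented_child: "oriented t s \<Longrightarrow> F t t' \<Longrightarrow> oriented t' t"
  unfolding oriented_def using tree_edge_in_N tree_edge_sym by blast

lemma branch_exit:
  assumes "oriented t s" "m \<in> branch t s" "F m n" "n \<notin> branch t s"
  shows "m = t \<and> n = s"
proof -
  have reach: "reachable F (N - {s}) t m" using assms(2) unfolding branch_def by blast
  have "n \<in> N" using tree_edge_in_N assms(3) by blast
  then have "n = s"
    using reachable.step[OF reach assms(3)] assms(4) unfolding branch_def by blast
  then have "F s t" using assms(1) \<open>n \<in> N\<close> tree_edge_sym unfolding oriented_def by blast
  have "m = t"
  proof (rule ccontr)
    assume "m \<noteq> t"
    then have "\<exists>ys. is_cycle F ys"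
      using cycle_if_reachable[OF reach] \<open>F s t\<close> assms(3) \<open>n = s\<close> by blast
    then show False using tree_acyclic by blast
  qed
  then show ?thesis using \<open>n = s\<close> by blast
qed

lemma bag_separation:
  assumes "oriented t s" "u \<in> branch t s" "v \<in> N - branch t s" "a \<in> B u" "a \<in> B v"
  shows "a \<in> B t \<and> a \<in> B s"
proof -
  have "a \<in> V" "u \<in> N" using assms(2,4) bag_subset_V branch_subset by blast+
  then obtain xs where "is_walk F xs" "set xs \<subseteq> {n \<in> N. a \<in> B n}" "hd xs = u" "last xs = v"
    using bags_connected assms(3-5) unfolding connected_on_def by blast
  then have "reachable F {n \<in> N. a \<in> B n} u v" using reachable_if_walk by metis
  then obtain m n where "F m n" "a \<in> B m" "a \<in> B n" "m \<in> branch t s" "n \<notin> branch t s"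
    using reachable_crossing_edge[of F _ u v "\<lambda>n. n \<in> branch t s"] assms(2,3) by blast
  then show ?thesis using branch_exit[OF assms(1)] by blast
qed

lemma nbr_of_private_vertex:
  assumes "oriented t s" "a \<in> private_vertices t s" "E a b"
  shows "b \<in> private_vertices t s \<union> (B t \<inter> B s)"
proof -
  obtain n where n: "n \<in> N" "a \<in> B n" "b \<in> B n" using edge_in_bag[OF assms(3)] by blast
  obtain u where u: "u \<in> branch t s" "a \<in> B u" "a \<notin> B s"
    using assms(2) unfolding private_vertices_def by blast
  have "n \<in> branch t s" using bag_separation[OF assms(1) u(1) _ u(2) n(2)] n(1) u(3) by blast
  moreover have "s \<notin> branch t s" "s \<in> N \<or> B s = {}" using branch_subset bag_outside by auto
  ultimately show ?thesis
    using bag_separation[OF assms(1) \<open>n \<in> branch t s\<close>, of s b] n(3)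
    unfolding private_vertices_def by blast
qed

lemma branch_child_subset:
  assumes "oriented t s" "F t t'" "t' \<noteq> s"
  shows "branch t' t \<subseteq> branch t s"
proof
  fix u assume "u \<in> branch t' t"
  then have "reachable F (N - {t}) t' u" unfolding branch_def by blast
  then have "reachable F (N - {s}) t u"
  proof (induction rule: reachable.induct)
    case refl
    have "t \<in> N - {s}" using self_in_branch[OF assms(1)] branch_subset by blast
    moreover have "t' \<in> N - {s}" using refl assms(3) by blast
    ultimately show ?case using assms(2) by (blast intro: reachable.intros)
  next
    case (step v w)
    have "v \<noteq> t" using reachable_in[OF step.hyps(1)] by blast
    moreover have "v \<in> branch t s" using step.IH unfolding branch_def by blast
    ultimately have "w \<noteq> s" using branch_exit[OF assms(1) _ step.hyps(2)] branch_subset by blast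
    then show ?case using reachable.step[OF step.IH step.hyps(2)] step.hyps(3) by blast
  qed
  then show "u \<in> branch t s" unfolding branch_def by blast
qed

lemma card_branch_child_less:
  assumes "oriented t s" "F t t'" "t' \<noteq> s"
  shows "card (branch t' t) < card (branch t s)"
proof (rule psubset_card_mono[OF finite_branch])
  have "t \<notin> branch t' t" using branch_subset by blast
  then show "branch t' t \<subset> branch t s"
    using branch_child_subset[OF assms] self_in_branch[OF assms(1)] by blast
qed

lemma branch_cases:
  "reachable F (N - {s}) t u \<Longrightarrow> u = t \<or> (\<exists>t'. F t t' \<and> t' \<noteq> s \<and> u \<in> branch t' t)"
proof (induction rule: reachable.induct)
  case (step v w)
  show ?case
  proof (cases "w = t")
    case False
    with step.hyps(3) have w: "w \<in> N - {t}" "w \<noteq> s" by auto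
    from step.IH show ?thesis
    proof
      assume "v = t"
      have "reachable F (N - {t}) w w" using w(1) by (rule reachable.refl)
      then show ?thesis using \<open>v = t\<close> step.hyps(2) w(2) unfolding branch_def by auto
    next
      assume "\<exists>t'. F t t' \<and> t' \<noteq> s \<and> v \<in> branch t' t"
      then obtain t' where t': "F t t'" "t' \<noteq> s" "reachable F (N - {t}) t' v"
        unfolding branch_def by blast
      have "reachable F (N - {t}) t' w" using reachable.step[OF t'(3) step.hyps(2) w(1)] .
      then show ?thesis using t'(1,2) unfolding branch_def by auto
    qed
  qed simp
qed simp

lemma private_vertex_in_child:
  assumes "a \<in> private_vertices t s" "a \<notin> B t"
  shows "\<exists>t'. F t t' \<and> t' \<noteq> s \<and> a \<in> private_vertices t' t"
proof -
  obtain u where u: "u \<in> branch t s" "a \<in> B u"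
    using assms(1) unfolding private_vertices_def by blast
  moreover have "u \<noteq> t" using u(2) assms(2) by blast
  ultimately obtain t' where "F t t'" "t' \<noteq> s" "u \<in> branch t' t"
    using branch_cases unfolding branch_def by blast
  then show ?thesis using u(2) assms(2) unfolding private_vertices_def by blast
qed

lemma finite_private_vertices: "finite (private_vertices t s)"
proof -
  have "private_vertices t s \<subseteq> V" using bag_subset_V unfolding private_vertices_def by blast
  then show ?thesis using finite_V finite_subset by blast
qed

lemma nbrs_in_bag_if_no_smaller_critical:
  assumes "\<And>t' s'. card (branch t' s') < card (branch t s) \<Longrightarrow> \<not> critical t' s'"
    and "oriented t s" "a \<in> private_vertices t s - B t" "E a b"
  shows "b \<in> B t"
  using assms
proof (induction "card (branch t s)" arbitrary: t s a rule: less_induct)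
  case less
  obtain t' where t': "F t t'" "t' \<noteq> s" "a \<in> private_vertices t' t"
    using private_vertex_in_child less.prems(3) by blast
  have oriented: "oriented t' t" using oriented_child less.prems(2) t'(1) by blast
  have smaller: "card (branch t' t) < card (branch t s)"
    using card_branch_child_less less.prems(2) t'(1,2) by blast
  then have "\<not> critical t' t" using less.prems(1) by blast
  then have "card (private_vertices t' t) < 2 \<or> B t' \<subseteq> B t"
    using oriented unfolding critical_def by auto
  then show ?case
  proof
    assume few: "card (private_vertices t' t) < 2"
    have "a \<noteq> b" using less.prems(4) edge_irrefl by blast
    have "b \<notin> private_vertices t' t"
    proof
      assume "b \<in> private_vertices t' t"
      then have "card {a, b} \<le> card (private_vertices t' t)"
        using t'(3) finite_private_vertices by (intro card_mono) auto
      then show False using few \<open>a \<noteq> b\<close> by simp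
    qed
    then show "b \<in> B t" using nbr_of_private_vertex[OF oriented t'(3) less.prems(4)] by blast
  next
    assume sub: "B t' \<subseteq> B t"
    have "b \<in> B t'"
    proof (rule less.hyps[OF smaller])
      show "\<not> critical t'' s''" if "card (branch t'' s'') < card (branch t' t)" for t'' s''
        using that smaller less.prems(1) by simp
      show "a \<in> private_vertices t' t - B t'" using t'(3) sub less.prems(3) by blast
    qed (use oriented less.prems(4) in auto)
    then show ?case using sub by blast
  qed
qed

lemma branch_eq_N_if_outside: "t \<in> N \<Longrightarrow> s \<notin> N \<Longrightarrow> branch t s = N"
proof -
  assume "t \<in> N" "s \<notin> N"
  have "reachable F N t u" if "u \<in> N" for u
    using tree_connected \<open>t \<in> N\<close> that reachable_if_walk unfolding connected_on_def by metis
  moreover have "N - {s} = N" using \<open>s \<notin> N\<close> by blast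
  ultimately have "N \<subseteq> branch t s" unfolding branch_def by auto
  then show "branch t s = N" using branch_subset by blast
qed

lemma critical_at_root:
  assumes "s \<notin> N" "2 \<le> card V"
  obtains t where "critical t s"
proof -
  have "V \<noteq> {}" using assms(2) by auto
  then obtain v where "v \<in> V" by blast
  then obtain t where t: "t \<in> N" "v \<in> B t" using vertex_in_bag by blast
  have "(\<Union>u\<in>N. B u) = V" using bag_subset_V vertex_in_bag by blast
  then have "private_vertices t s = V"
    using branch_eq_N_if_outside[OF t(1) assms(1)] bag_outside[OF assms(1)]
    unfolding private_vertices_def by simp
  moreover have "oriented t s" using t(1) assms(1) unfolding oriented_def by blast
  moreover have "\<not> B t \<subseteq> B s" using t(2) bag_outside[OF assms(1)] by blast
  ultimately have "critical t s" using assms(2) unfolding critical_def by simp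
  then show thesis by (rule that)
qed

end

lemma tree_decomp_restrict:
  assumes "simple_graph V E" "tree_decomposition V E N F B"
  shows "tree_decomp V E N F (\<lambda>t. if t \<in> N then B t else {})"
proof
  have "{t \<in> N. v \<in> (if t \<in> N then B t else {})} = {t \<in> N. v \<in> B t}" for v
    by auto
  then show "tree_decomposition V E N F (\<lambda>t. if t \<in> N then B t else {})"
    using assms(2) unfolding tree_decomposition_def by simp
qed (use assms(1) in auto)

locale cubic_triangle_K23_domino_free =
  fixes V :: "'a set" and E :: "'a \<Rightarrow> 'a \<Rightarrow> bool"
  assumes simple: "simple_graph V E" and cubic: "cubic V E"
    and no_triangle: "\<not> has_triangle V E" and no_K23: "\<not> has_K23 V E"
    and no_domino: "\<not> has_domino V E"
begin

definition nbhd :: "'a \<Rightarrow> 'a set" where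
  "nbhd v = {u. E v u}"

lemma mem_nbhd [simp]: "u \<in> nbhd v \<longleftrightarrow> E v u"
  by (simp add: nbhd_def)

lemma edge_in_V: "E u v \<Longrightarrow> u \<in> V \<and> v \<in> V"
  and edge_sym: "E u v \<Longrightarrow> E v u"
  and edge_irrefl: "\<not> E v v"
  using simple by (auto simp: simple_graph_def)

lemma finite_V: "finite V"
  using simple by (simp add: simple_graph_def)

lemma nbhd_subset_V: "nbhd v \<subseteq> V"
  using edge_in_V by auto

lemma finite_nbhd: "finite (nbhd v)"
  using nbhd_subset_V finite_V finite_subset by blast

lemma card_nbhd: "v \<in> V \<Longrightarrow> card (nbhd v) = 3"
proof -
  have "nbhd v = {u \<in> V. E v u}" using edge_in_V by auto
  then show "v \<in> V \<Longrightarrow> card (nbhd v) = 3" using cubic by (simp add: cubic_def)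
qed

lemma nbhd_disjoint_if_adjacent:
  assumes "E u v"
  shows "nbhd u \<inter> nbhd v = {}"
proof (rule ccontr)
  assume "nbhd u \<inter> nbhd v \<noteq> {}"
  then obtain x where "E u x" "E v x" by auto
  then have "distinct [u, v, x] \<and> {u, v, x} \<subseteq> V"
    using assms edge_in_V edge_irrefl edge_sym by auto
  then have "has_triangle V E"
    using assms \<open>E u x\<close> \<open>E v x\<close> unfolding has_triangle_def
    by (intro exI[of _ u] exI[of _ v] exI[of _ x]) simp
  then show False using no_triangle by contradiction
qed

lemma inj_on_nbhd: "inj_on nbhd V"
proof
  fix u v assume uv: "u \<in> V" "v \<in> V" "nbhd u = nbhd v"
  show "u = v"
  proof (rule ccontr)
    assume "u \<noteq> v"
    obtain b1 b2 b3 where b: "nbhd u = {b1, b2, b3}" "distinct [b1, b2, b3]"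
      using card_nbhd[OF uv(1)] by (auto simp: card_3_iff)
    have "{b1, b2, b3} \<subseteq> nbhd u" "{b1, b2, b3} \<subseteq> nbhd v" using b(1) uv(3) by auto
    then have "E u b1" "E u b2" "E u b3" "E v b1" "E v b2" "E v b3" by auto
    moreover have "distinct [u, v, b1, b2, b3] \<and> {u, v, b1, b2, b3} \<subseteq> V"
      using calculation \<open>u \<noteq> v\<close> b(2) edge_in_V edge_irrefl by auto
    ultimately have "has_K23 V E" unfolding has_K23_def
      by (intro exI[of _ u] exI[of _ v] exI[of _ b1] exI[of _ b2] exI[of _ b3]) simp
    then show False using no_K23 by contradiction
  qed
qed

lemma three_le_card_if_nbhd_subset:
  "v \<in> V \<Longrightarrow> finite S \<Longrightarrow> nbhd v \<subseteq> S \<Longrightarrow> 3 \<le> card S"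
  by (metis card_mono card_nbhd)

lemma nbhd_eq_if_subset:
  "v \<in> V \<Longrightarrow> finite S \<Longrightarrow> card S \<le> 3 \<Longrightarrow> nbhd v \<subseteq> S \<Longrightarrow> nbhd v = S"
  by (metis card_subset_eq card_nbhd three_le_card_if_nbhd_subset le_antisym)

lemma no_two_nbhds_in_three_set:
  assumes "u \<in> V" "v \<in> V" "u \<noteq> v" "finite S" "card S \<le> 3" "nbhd u \<subseteq> S" "nbhd v \<subseteq> S"
  shows False
  using assms nbhd_eq_if_subset inj_on_nbhd by (metis inj_onD)

lemma nbhd_eq_Diff_singleton:
  assumes "v \<in> V" "finite X" "card X = 4" "nbhd v \<subseteq> X"
  obtains e where "e \<in> X" "nbhd v = X - {e}"
proof -
  have "card (X - nbhd v) = 1"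
    using assms card_nbhd by (simp add: card_Diff_subset finite_subset)
  then obtain e where "X - nbhd v = {e}" by (rule card_1_singletonE)
  then show thesis using that assms(4) by blast
qed

lemma no_two_inner_vertices:
  assumes X: "X \<subseteq> V" "card X \<le> 4"
    and xy: "x \<in> X" "y \<in> X" "x \<noteq> y" and nbhds: "nbhd x \<subseteq> X" "nbhd y \<subseteq> X"
  shows False
proof -
  have fin: "finite X" using X(1) finite_V finite_subset by blast
  have V: "x \<in> V" "y \<in> V" using X(1) xy by auto
  have "E x y"
  proof (rule ccontr)
    assume "\<not> E x y"
    then have "nbhd x \<subseteq> X - {x, y}" using nbhds(1) edge_irrefl by auto
    then have "3 \<le> card (X - {x, y})" using three_le_card_if_nbhd_subset V(1) fin by simp
    moreover have "card (X - {x, y}) = card X - 2" using xy fin by (simp add: card_Diff_subset)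
    ultimately show False using X(2) by linarith
  qed
  then have "card (nbhd x \<union> nbhd y) = card (nbhd x) + card (nbhd y)"
    by (intro card_Un_disjoint finite_nbhd nbhd_disjoint_if_adjacent)
  moreover have "card (nbhd x \<union> nbhd y) \<le> card X" using nbhds fin by (simp add: card_mono)
  ultimately show False using X(2) card_nbhd V by simp
qed

lemma no_single_outer_vertex:
  assumes X: "X \<subseteq> V" "card X \<le> 4"
    and w: "w \<in> V" "w \<notin> X" "nbhd w \<subseteq> X"
    and x: "x \<in> X" "nbhd x \<subseteq> insert w X"
  shows False
proof -
  have fin: "finite X" using X(1) finite_V finite_subset by blast
  have "x \<in> V" using X(1) x(1) by blast
  show False
  proof (cases "E w x")
    case True
    then have "nbhd x \<inter> nbhd w = {}" using nbhd_disjoint_if_adjacent edge_sym by blast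
    then have "nbhd x \<subseteq> insert w (X - nbhd w)" using x(2) by blast
    then have "3 \<le> card (insert w (X - nbhd w))"
      using three_le_card_if_nbhd_subset \<open>x \<in> V\<close> fin by simp
    moreover have "card (insert w (X - nbhd w)) = Suc (card X - 3)"
      using w card_nbhd fin by (simp add: card_Diff_subset finite_nbhd)
    ultimately show False using X(2) by linarith
  next
    case False
    then have "nbhd x \<subseteq> X - {x}" "nbhd w \<subseteq> X - {x}"
      using x w(3) edge_sym edge_irrefl by auto
    moreover have "card (X - {x}) \<le> 3" using X(2) x(1) fin by simp
    moreover have "x \<noteq> w" using x(1) w(2) by blast
    ultimately show False
      using no_two_nbhds_in_three_set[of x w "X - {x}"] \<open>x \<in> V\<close> w(1) fin by simp
  qed
qed

lemma no_two_outer_vertices: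
  assumes X: "X \<subseteq> V" "card X \<le> 4"
    and w: "w1 \<in> V" "w2 \<in> V" "w1 \<noteq> w2" "nbhd w1 \<subseteq> X" "nbhd w2 \<subseteq> X"
    and x: "x \<in> X" "nbhd x \<subseteq> X \<union> {w1, w2}"
  shows False
proof -
  have fin: "finite X" using X(1) finite_V finite_subset by blast
  have "x \<in> V" using X(1) x(1) by blast
  have "\<not> card X \<le> 3" using no_two_nbhds_in_three_set[OF w(1-3) fin _ w(4,5)] by blast
  then have "card X = 4" using X(2) by linarith
  obtain e1 where e1: "e1 \<in> X" "nbhd w1 = X - {e1}"
    using nbhd_eq_Diff_singleton[OF w(1) fin \<open>card X = 4\<close> w(4)] by blast
  obtain e2 where e2: "e2 \<in> X" "nbhd w2 = X - {e2}"
    using nbhd_eq_Diff_singleton[OF w(2) fin \<open>card X = 4\<close> w(5)] by blast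
  have "nbhd w1 \<noteq> nbhd w2" using inj_on_nbhd w(1-3) by (auto simp: inj_on_def)
  then have "e1 \<noteq> e2" using e1 e2 by auto
  have x_eq: "x = e"
    if ww': "{w, w'} = {w1, w2}" and e: "e \<in> X" "nbhd w = X - {e}" "nbhd w' = X - {e'}" "e \<noteq> e'"
    for w w' e e'
  proof (rule ccontr)
    assume "x \<noteq> e"
    then have "x \<in> nbhd w" using e(2) x(1) by simp
    then have "nbhd x \<inter> nbhd w = {}" using nbhd_disjoint_if_adjacent edge_sym by simp
    then have "nbhd x \<subseteq> {e, w, w'}" using x(2) ww' e(2) by blast
    moreover have "card {e, w, w'} \<le> 3" by (simp add: card_insert_if)
    ultimately have "nbhd x = {e, w, w'}" using nbhd_eq_if_subset \<open>x \<in> V\<close> by simp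
    then have "E x w'" "e \<in> nbhd x" by auto
    moreover have "e \<in> nbhd w'" using e by simp
    ultimately show False using nbhd_disjoint_if_adjacent by blast
  qed
  have "x = e1" using x_eq[OF _ e1 e2(2) \<open>e1 \<noteq> e2\<close>] by blast
  moreover have "x = e2" using x_eq[OF _ e2 e1(2)] \<open>e1 \<noteq> e2\<close> by blast
  ultimately show False using \<open>e1 \<noteq> e2\<close> by simp
qed

lemma no_three_outer_vertices:
  assumes X: "X \<subseteq> V" "card X \<le> 4"
    and w: "w1 \<in> V - X" "w2 \<in> V - X" "w3 \<in> V - X" "distinct [w1, w2, w3]"
      "nbhd w1 \<subseteq> X" "nbhd w2 \<subseteq> X" "nbhd w3 \<subseteq> X"
  shows False
proof -
  have fin: "finite X" using X(1) finite_V finite_subset by blast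
  have "\<not> card X \<le> 3" using no_two_nbhds_in_three_set[of w1 w2 X] w fin by auto
  then have "card X = 4" using X(2) by linarith
  obtain e1 where e1: "e1 \<in> X" "nbhd w1 = X - {e1}"
    using nbhd_eq_Diff_singleton w(1,5) fin \<open>card X = 4\<close> by blast
  obtain e2 where e2: "e2 \<in> X" "nbhd w2 = X - {e2}"
    using nbhd_eq_Diff_singleton w(2,6) fin \<open>card X = 4\<close> by blast
  obtain e3 where e3: "e3 \<in> X" "nbhd w3 = X - {e3}"
    using nbhd_eq_Diff_singleton w(3,7) fin \<open>card X = 4\<close> by blast
  have "distinct [nbhd w1, nbhd w2, nbhd w3]" using inj_on_nbhd w(1-4) by (auto simp: inj_on_def)
  then have e_dist: "distinct [e1, e2, e3]" using e1 e2 e3 by auto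
  have "\<not> X \<subseteq> {e1, e2, e3}"
  proof
    assume "X \<subseteq> {e1, e2, e3}"
    then have "card X \<le> card {e1, e2, e3}" by (simp add: card_mono)
    also have "\<dots> \<le> 3" by (simp add: card_insert_if)
    finally show False using \<open>card X = 4\<close> by simp
  qed
  then obtain f where f: "f \<in> X" "f \<notin> {e1, e2, e3}" by blast
  have "f \<in> nbhd w1" "f \<in> nbhd w2" "f \<in> nbhd w3" "e2 \<in> nbhd w1" "e3 \<in> nbhd w1"
    "e3 \<in> nbhd w2" "e2 \<in> nbhd w3"
    using e1 e2 e3 f e_dist by auto
  then have "E w2 f" "E f w3" "E e3 w1" "E w1 e2" "E w2 e3" "E f w1" "E w3 e2"
    using edge_sym by auto
  moreover have "distinct [w2, f, w3, e3, w1, e2] \<and> {w2, f, w3, e3, w1, e2} \<subseteq> V"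
    using w e1 e2 e3 f X(1) e_dist by auto
  ultimately have "has_domino V E" unfolding has_domino_def
    by (intro exI[of _ w2] exI[of _ f] exI[of _ w3] exI[of _ e3] exI[of _ w1] exI[of _ e2]) simp
  then show False using no_domino by contradiction
qed

lemma no_attachment_to_small_bag:
  assumes X: "X \<subseteq> V" "card X \<le> 4"
    and A: "A \<subseteq> V" "2 \<le> card A" "A \<inter> X \<noteq> {}"
    and outer: "\<And>w. w \<in> A - X \<Longrightarrow> nbhd w \<subseteq> X"
    and inner: "\<And>x. x \<in> A \<inter> X \<Longrightarrow> nbhd x \<subseteq> X \<union> A"
  shows False
proof -
  obtain x where x: "x \<in> A \<inter> X" using A(3) by blast
  consider "A - X = {}" | w where "A - X = {w}"
    | w1 w2 where "w1 \<in> A - X" "w2 \<in> A - X" "w1 \<noteq> w2"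
    by blast
  then show False
  proof cases
    case 1
    have "\<not> A \<subseteq> {x}"
      using card_mono[of "{x}" A] A(2) by fastforce
    then obtain y where "y \<in> A" "y \<noteq> x" by blast
    then show False
      using no_two_inner_vertices[OF X, of x y] x inner 1 by blast
  next
    case (2 w)
    then have "nbhd x \<subseteq> insert w X" using inner x by blast
    then show False
      using no_single_outer_vertex[OF X, of w x] 2 A(1) outer x by blast
  next
    case (3 w1 w2)
    show False
    proof (cases "A - X \<subseteq> {w1, w2}")
      case True
      then have "nbhd x \<subseteq> X \<union> {w1, w2}" using inner x by blast
      then show False
        using no_two_outer_vertices[OF X, of w1 w2 x] 3 A(1) outer x by blast
    next
      case False
      then obtain w3 where "w3 \<in> A - X" "w3 \<noteq> w1" "w3 \<noteq> w2" by blast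
      then show False
        using no_three_outer_vertices[OF X, of w1 w2 w3] 3 A(1) outer by auto
    qed
  qed
qed

lemma no_tree_decomposition_of_width_3:
  assumes "tree_decomp V E N F B" "\<And>t. t \<in> N \<Longrightarrow> card (B t) \<le> 4" "V \<noteq> {}" "s \<notin> N"
  shows False
proof -
  interpret tree_decomp V E N F B by (fact assms(1))
  have not_critical: "\<not> critical t s" for t s
  proof (induction "card (branch t s)" arbitrary: t s rule: less_induct)
    case less
    show ?case
    proof
      assume crit: "critical t s"
      then have "oriented t s" "t \<in> N" unfolding critical_def oriented_def by auto
      show False
      proof (rule no_attachment_to_small_bag[of "B t" "private_vertices t s"])
        show "B t \<subseteq> V" "private_vertices t s \<subseteq> V"
          using bag_subset_V unfolding private_vertices_def by blast+
        show "card (B t) \<le> 4" using assms(2) \<open>t \<in> N\<close> .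
        show "2 \<le> card (private_vertices t s)" using crit unfolding critical_def by blast
        show "private_vertices t s \<inter> B t \<noteq> {}"
          using crit self_in_branch[OF \<open>oriented t s\<close>]
          unfolding critical_def private_vertices_def by blast
        show "nbhd w \<subseteq> B t" if "w \<in> private_vertices t s - B t" for w
          using nbrs_in_bag_if_no_smaller_critical[OF less \<open>oriented t s\<close> that] by auto
        show "nbhd x \<subseteq> B t \<union> private_vertices t s" if "x \<in> private_vertices t s \<inter> B t" for x
        proof
          fix b assume "b \<in> nbhd x"
          then show "b \<in> B t \<union> private_vertices t s"
            using nbr_of_private_vertex[OF \<open>oriented t s\<close>, of x b] that by auto
        qed
      qed
    qed
  qed
  obtain v where "v \<in> V" using assms(3) by blast
  then have "3 \<le> card V" using three_le_card_if_nbhd_subset nbhd_subset_V finite_V by blast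
  then obtain t where "critical t s" using critical_at_root[OF assms(4)] by force
  then show False using not_critical by blast
qed

lemma not_treewidth_le_3:
  assumes "V \<noteq> {}"
  shows "\<not> treewidth_le V E 3"
proof
  assume "treewidth_le V E 3"
  then obtain N :: "nat set" and F B where tdec: "tree_decomposition V E N F B"
    and width: "\<forall>t\<in>N. card (B t) \<le> 4"
    unfolding treewidth_le_def by auto
  have "finite N" using tdec by (simp add: tree_decomposition_def is_tree_def simple_graph_def)
  then obtain s where "s \<notin> N" using ex_new_if_finite[OF infinite_UNIV_nat] by blast
  then show False
    using no_tree_decomposition_of_width_3[OF tree_decomp_restrict[OF simple tdec]] width assms
    by auto
qed

end

theorem lemma28:
  fixes V :: "'a set" and E :: "'a \<Rightarrow> 'a \<Rightarrow> bool"
  assumes "simple_graph V E" and "V \<noteq> {}" and "cubic V E" and "treewidth_le V E 3"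
  shows "has_triangle V E \<or> has_K23 V E \<or> has_domino V E"
proof (rule ccontr)
  assume "\<not> ?thesis"
  then interpret cubic_triangle_K23_domino_free V E
    using assms(1,3) by unfold_locales auto
  show False using not_treewidth_le_3 assms(2,4) by blast
qed

end
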